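(* Let $\mathcal{G}=(V,L)$ be a finite connected undirected graph with monitor set $M$ and non-monitor set $N=V\setminus M$, $\sigma=|N|$, with measurement paths given by Controllable Simple-path Probing (CSP). For $v\in N$ let $\pi_v:=\min\big(\min_{m\in M}|C_{\mathcal{G}_m}(v,m')|,\ |C_{\mathcal{G}^*}(v,m')|-1\big)$. For $1\le k\le\sigma-1$ let $S^{\mathrm{outer}}(k):=\{v\in N:\pi_v\ge k\}$ and $S^{\mathrm{inner}}(k):=\{v\in N:\pi_v\ge k+1\}$, and let $S^*_{\mathrm{CSP}}(k)$ be the maximum-cardinality $k$-identifiable subset of $N$. Then $S^{\mathrm{inner}}(k)\subseteq S^*_{\mathrm{CSP}}(k)\subseteq S^{\mathrm{outer}}(k)$.
   Context: Under CSP, the measurement paths $P$ are all simple paths (no repeated nodes) in $\mathcal{G}$ between two distinct monitors. A failure set is any $F\subseteq N$; a path fails iff it traverses a node of $F$. $P_F$ is the set of paths in $P$ traversing a node of $F$; $F_1,F_2$ distinguishable iff $P_{F_1}\ne P_{F_2}$. $S\subseteq N$ is $k$-identifiable if any two failure sets $F_1,F_2$ with $|F_1|,|F_2|\le k$ and $F_1\cap S\ne F_2\cap S$ are distinguishable; the maximum-cardinality $k$-identifiable subset of $N$ is unique. For $M'\subseteq M$, $\mathcal{N}(M')$ is the set of non-monitors adjacent to a monitor in $M'$. $\mathcal{G}^*$: delete all monitors from $\mathcal{G}$, add a virtual node $m'$, link $m'$ to every node of $\mathcal{N}(M)$. For $m\in M$, $\mathcal{G}_m$: delete all monitors, add a virtual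 node $m'$, link $m'$ to every node of $\mathcal{N}(M\setminus\{m\})$. For nodes $s,t$ of a graph $\mathcal{H}$, $C_{\mathcal{H}}(s,t)$ is a minimum-cardinality set of nodes (other than $s,t$) whose deletion destroys all $s$–$t$ paths; if $s,t$ are adjacent, $C_{\mathcal{H}}(s,t):=V(\mathcal{H})\setminus\{t\}$. *)

theory Defs
  imports Main
begin

definition simple_graph :: "'a set \<Rightarrow> ('a \<times> 'a) set \<Rightarrow> bool" where
  "simple_graph V E \<longleftrightarrow> finite V \<and> E \<subseteq> V \<times> V \<and> sym E \<and> (\<forall>x. (x, x) \<notin> E)"

definition connected_graph :: "'a set \<Rightarrow> ('a \<times> 'a) set \<Rightarrow> bool" where
  "connected_graph V E \<longleftrightarrow> (\<forall>u\<in>V. \<forall>v\<in>V. (u, v) \<in> E\<^sup>*)"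

definition simple_path :: "('a \<times> 'a) set \<Rightarrow> 'a list \<Rightarrow> bool" where
  "simple_path E p \<longleftrightarrow> p \<noteq> [] \<and> distinct p \<and> (\<forall>i. Suc i < length p \<longrightarrow> (p ! i, p ! Suc i) \<in> E)"

definition csp_paths :: "('a \<times> 'a) set \<Rightarrow> 'a set \<Rightarrow> 'a list set" where
  "csp_paths E M = {p. simple_path E p \<and> hd p \<in> M \<and> last p \<in> M \<and> hd p \<noteq> last p}"

definition failed_paths :: "'a list set \<Rightarrow> 'a set \<Rightarrow> 'a list set" where
  "failed_paths P F = {p \<in> P. set p \<inter> F \<noteq> {}}"

definition k_identifiable :: "('a \<times> 'a) set \<Rightarrow> 'a set \<Rightarrow> 'a set \<Rightarrow> nat \<Rightarrow> 'a set \<Rightarrow> bool" where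
  "k_identifiable E M N k S \<longleftrightarrow>
     (\<forall>F1 F2. F1 \<subseteq> N \<longrightarrow> F2 \<subseteq> N \<longrightarrow> card F1 \<le> k \<longrightarrow> card F2 \<le> k \<longrightarrow>
        F1 \<inter> S \<noteq> F2 \<inter> S \<longrightarrow> failed_paths (csp_paths E M) F1 \<noteq> failed_paths (csp_paths E M) F2)"

definition mon_nbrs :: "'a set \<Rightarrow> ('a \<times> 'a) set \<Rightarrow> 'a set \<Rightarrow> 'a set \<Rightarrow> 'a set" where
  "mon_nbrs V E M M' = {v \<in> V - M. \<exists>m\<in>M'. (m, v) \<in> E}"

text \<open>Auxiliary graph: delete monitors, add virtual node None (= m') linked to
  every node of A. Original nodes v are represented as Some v.\<close>
definition aux_vertices :: "'a set \<Rightarrow> 'a set \<Rightarrow> 'a option set" where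
  "aux_vertices V M = Some ` (V - M) \<union> {None}"

definition aux_edges :: "'a set \<Rightarrow> ('a \<times> 'a) set \<Rightarrow> 'a set \<Rightarrow> 'a set \<Rightarrow> ('a option \<times> 'a option) set" where
  "aux_edges V E M A =
     {(Some a, Some b) | a b. (a, b) \<in> E \<and> a \<in> V - M \<and> b \<in> V - M}
     \<union> {(None, Some v) | v. v \<in> A} \<union> {(Some v, None) | v. v \<in> A}"

definition separates :: "'b set \<Rightarrow> ('b \<times> 'b) set \<Rightarrow> 'b \<Rightarrow> 'b \<Rightarrow> 'b set \<Rightarrow> bool" where
  "separates VH EH s t C \<longleftrightarrow> C \<subseteq> VH - {s, t} \<and>
     (s, t) \<notin> (EH \<inter> ((VH - C) \<times> (VH - C)))\<^sup>*"

definition cut_size :: "'b set \<Rightarrow> ('b \<times> 'b) set \<Rightarrow> 'b \<Rightarrow> 'b \<Rightarrow> nat" where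
  "cut_size VH EH s t =
     (if (s, t) \<in> EH then card (VH - {t}) else Min {card C | C. separates VH EH s t C})"

definition pi_val :: "'a set \<Rightarrow> ('a \<times> 'a) set \<Rightarrow> 'a set \<Rightarrow> 'a \<Rightarrow> int" where
  "pi_val V E M v = Min
     ({int (cut_size (aux_vertices V M) (aux_edges V E M (mon_nbrs V E M (M - {m}))) (Some v) None) | m. m \<in> M}
      \<union> {int (cut_size (aux_vertices V M) (aux_edges V E M (mon_nbrs V E M M)) (Some v) None) - 1})"

definition S_outer :: "'a set \<Rightarrow> ('a \<times> 'a) set \<Rightarrow> 'a set \<Rightarrow> nat \<Rightarrow> 'a set" where
  "S_outer V E M k = {v \<in> V - M. pi_val V E M v \<ge> int k}"

definition S_inner :: "'a set \<Rightarrow> ('a \<times> 'a) set \<Rightarrow> 'a set \<Rightarrow> nat \<Rightarrow> 'a set" where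
  "S_inner V E M k = {v \<in> V - M. pi_val V E M v \<ge> int k + 1}"

end

theory Submission
  imports Defs "HOL-Library.Transitive_Closure_Table"
begin

(* Outer bound: if pi_v < k, a minimum separator of v from m' in some G_m, or a minimum separator
   in G* with one node removed, is a set F of fewer than k non-monitors meeting every measurement
   path through v.  Then F and F \<union> {v} fail exactly the same paths, so no k-identifiable set
   contains v.
   Inner bound: if pi_v > k, then after deleting any set F of at most k other non-monitors, v is
   still joined to the virtual node m', and no single further node separates them.  By the two-path
   case of Menger's theorem there are two internally disjoint paths from v to m', i.e. to two
   distinct monitors, and together they form a measurement path through v avoiding F.  So v can be
   added to every k-identifiable set, and by maximality it belongs to S*. *)

section \<open>Simple paths in a relation\<close>

abbreviation walk :: "('a \<times> 'a) set \<Rightarrow> 'a list \<Rightarrow> bool" where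
  "walk R \<equiv> successively (\<lambda>x y. (x, y) \<in> R)"

definition path_between :: "('a \<times> 'a) set \<Rightarrow> 'a list \<Rightarrow> 'a \<Rightarrow> 'a \<Rightarrow> bool" where
  "path_between R p a b \<longleftrightarrow> p \<noteq> [] \<and> hd p = a \<and> last p = b \<and> distinct p \<and> walk R p"

lemma rtrancl_path_imp_successively:
  "rtrancl_path r x xs y \<Longrightarrow> successively r (x # xs) \<and> last (x # xs) = y"
  by (induction rule: rtrancl_path.induct) auto

lemma rtrancl_imp_path_between:
  assumes "(a, b) \<in> R\<^sup>*"
  obtains p where "path_between R p a b"
proof -
  have "(\<lambda>x y. (x, y) \<in> R)\<^sup>*\<^sup>* a b" using assms by (simp add: rtranclp_rtrancl_eq)
  then obtain xs where "rtrancl_path (\<lambda>x y. (x, y) \<in> R) a xs b"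
    using rtranclp_eq_rtrancl_path by metis
  then obtain xs' where "rtrancl_path (\<lambda>x y. (x, y) \<in> R) a xs' b" "distinct (a # xs')"
    using rtrancl_path_distinct by metis
  then have "path_between R (a # xs') a b"
    using rtrancl_path_imp_successively unfolding path_between_def by fastforce
  then show thesis by (rule that)
qed

lemma walk_imp_rtrancl: "walk R p \<Longrightarrow> p \<noteq> [] \<Longrightarrow> (hd p, last p) \<in> R\<^sup>*"
  by (induction p rule: induct_list012) (auto intro: converse_rtrancl_into_rtrancl)

lemma walk_restrict_subset:
  "walk (R \<inter> A \<times> A) p \<Longrightarrow> p \<noteq> [] \<Longrightarrow> hd p \<in> A \<Longrightarrow> set p \<subseteq> A"
  by (induction p) (fastforce simp: successively_Cons)+

lemma walk_rev: "sym R \<Longrightarrow> walk R p \<Longrightarrow> walk R (rev p)"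
  by (simp, erule successively_mono) (auto dest: symD)

lemma path_between_rev: "sym R \<Longrightarrow> path_between R p a b \<Longrightarrow> path_between R (rev p) b a"
  unfolding path_between_def by (auto simp: hd_rev last_rev simp del: successively_rev intro: walk_rev)

lemma path_between_appendD:
  assumes "path_between R (xs @ y # ys) a b"
  shows "path_between R (xs @ [y]) a y" and "path_between R (y # ys) y b"
  using assms unfolding path_between_def
  by (auto simp: successively_append_iff hd_append split: if_splits)

lemma path_between_join:
  assumes p: "path_between R p a v" and q: "path_between R q v b" and disj: "set p \<inter> set q \<subseteq> {v}"
  shows "path_between R (p @ tl q) a b"
proof -
  obtain t where q_eq: "q = v # t"
    using q unfolding path_between_def by (cases q) auto
  obtain p' where p_eq: "p = p' @ [v]"
    using p unfolding path_between_def by (metis append_butlast_last_id)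
  show ?thesis
    using p q disj unfolding path_between_def q_eq p_eq
    by (auto simp: successively_append_iff hd_append)
qed

lemma path_between_avoiding:
  assumes "(s, t) \<in> (Restr R (- {z}))\<^sup>*" "s \<noteq> z"
  obtains Q where "path_between R Q s t" "z \<notin> set Q"
proof -
  obtain Q where Q: "path_between (Restr R (- {z})) Q s t"
    using assms(1) by (rule rtrancl_imp_path_between)
  then have "set Q \<subseteq> - {z}"
    using assms(2) by (intro walk_restrict_subset) (auto simp: path_between_def)
  moreover have "walk R Q"
    using Q unfolding path_between_def by (auto intro: successively_mono)
  ultimately show thesis
    using Q that unfolding path_between_def by blast
qed

section \<open>Menger's theorem for two paths\<close>

definition no_cut_vertex :: "('a \<times> 'a) set \<Rightarrow> 'a \<Rightarrow> 'a \<Rightarrow> bool" where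
  "no_cut_vertex R s t \<longleftrightarrow> (\<forall>z. z \<noteq> s \<longrightarrow> z \<noteq> t \<longrightarrow> (s, t) \<in> (Restr R (- {z}))\<^sup>*)"

definition two_disjoint_paths :: "('a \<times> 'a) set \<Rightarrow> 'a \<Rightarrow> 'a \<Rightarrow> bool" where
  "two_disjoint_paths R s t \<longleftrightarrow>
     (\<exists>P1 P2. path_between R P1 s t \<and> path_between R P2 s t \<and> set P1 \<inter> set P2 \<subseteq> {s, t})"

lemma two_disjoint_paths_to_inner_vertex:
  assumes "sym R" and P1: "path_between R P1 s w" and P2: "path_between R P2 s w"
    and disj: "set P1 \<inter> set P2 \<subseteq> {s, w}" and x: "x \<in> set P1" "x \<noteq> s" "x \<noteq> w"
  shows "two_disjoint_paths R s x"
proof -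
  obtain a b where P1_eq: "P1 = a @ x # b"
    using x(1) split_list by metis
  have to_x: "path_between R (a @ [x]) s x" and from_x: "path_between R (x # b) x w"
    using P1 unfolding P1_eq by (fact path_between_appendD)+
  have dist: "distinct (a @ x # b)" and ends: "hd (a @ x # b) = s" "last (a @ x # b) = w"
    using P1 unfolding P1_eq path_between_def by auto
  have "s \<in> set a"
    using ends(1) x(2) by (cases a) auto
  moreover have "w \<in> set b"
    using ends(2) x(3) by (cases b rule: rev_cases) auto
  ultimately have a_P2: "set a \<inter> set P2 \<subseteq> {s}" and b_P2: "set b \<inter> set P2 \<subseteq> {w}"
    using disj dist x unfolding P1_eq by auto
  have via_P2: "path_between R (P2 @ tl (rev (x # b))) s x"
    using path_between_join[OF P2 path_between_rev[OF \<open>sym R\<close> from_x]] b_P2 x disj by auto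
  have "set (tl (rev (x # b))) \<subseteq> insert x (set b)"
    by (cases b rule: rev_cases) auto
  then have "set (a @ [x]) \<inter> set (P2 @ tl (rev (x # b))) \<subseteq> {s, x}"
    using a_P2 dist by auto
  then show ?thesis
    unfolding two_disjoint_paths_def using to_x via_P2 by blast
qed

lemma two_disjoint_paths_extend:
  assumes P1: "path_between R P1 s w" and P2: "path_between R P2 s w"
    and disj: "set P1 \<inter> set P2 \<subseteq> {s, w}" and z: "z \<in> set P1" "z \<noteq> w"
    and Z: "path_between R (z # zs) z x" "set zs \<inter> (set P1 \<union> set P2) = {}"
    and wx: "(w, x) \<in> R" "x \<notin> set P1 \<union> set P2"
  shows "two_disjoint_paths R s x"
proof -
  obtain a b where P1_eq: "P1 = a @ z # b"
    using z(1) split_list by metis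
  have to_z: "path_between R (a @ [z]) s z"
    using P1 unfolding P1_eq by (fact path_between_appendD)
  have "distinct (a @ z # b)" "last (a @ z # b) = w"
    using P1 unfolding P1_eq path_between_def by auto
  then have w_a: "w \<notin> set (a @ [z])"
    using z(2) by (cases b rule: rev_cases) auto
  have via_z: "path_between R ((a @ [z]) @ zs) s x"
    using path_between_join[OF to_z Z(1)] Z(2) unfolding P1_eq by auto
  have "w \<in> set P1"
    using P1 unfolding path_between_def by auto
  then have "path_between R [w, x] w x"
    using wx unfolding path_between_def by auto
  then have via_P2: "path_between R (P2 @ [x]) s x"
    using path_between_join[OF P2] wx(2) by fastforce
  have "z \<notin> set zs"
    using Z(1) unfolding path_between_def by simp
  then have "set ((a @ [z]) @ zs) \<inter> set (P2 @ [x]) \<subseteq> {s, x}"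
    using disj w_a Z(2) unfolding P1_eq by auto
  then show ?thesis
    unfolding two_disjoint_paths_def using via_z via_P2 by blast
qed

lemma two_disjoint_paths_step:
  assumes "sym R" and P: "path_between R P1 s w" "path_between R P2 s w" "set P1 \<inter> set P2 \<subseteq> {s, w}"
    and wx: "(w, x) \<in> R" "x \<noteq> s" "x \<noteq> w"
    and Q: "path_between R Q s x" "w \<notin> set Q"
  shows "two_disjoint_paths R s x"
proof (cases "x \<in> set P1 \<union> set P2")
  case True
  then show ?thesis
    using two_disjoint_paths_to_inner_vertex[OF \<open>sym R\<close> P(1,2)]
      two_disjoint_paths_to_inner_vertex[OF \<open>sym R\<close> P(2,1)] P(3) wx(2,3)
    by (auto simp: Int_commute)
next
  case False
  \<comment> \<open>Reroute through the last vertex of Q on P1 or P2; it is not w, since Q avoids w.\<close>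
  have "s \<in> set Q \<inter> (set P1 \<union> set P2)"
    using Q(1) P(1) unfolding path_between_def by (metis IntI UnI1 hd_in_set)
  then obtain ys z zs where Q_eq: "Q = ys @ z # zs" and "z \<in> set P1 \<union> set P2"
    and "\<forall>y\<in>set zs. y \<notin> set P1 \<union> set P2"
    using split_list_last_prop[of Q "\<lambda>y. y \<in> set P1 \<union> set P2"] by blast
  moreover have "path_between R (z # zs) z x"
    using Q(1) unfolding Q_eq by (fact path_between_appendD)
  moreover have "z \<noteq> w"
    using Q(2) unfolding Q_eq by auto
  ultimately show ?thesis
    using two_disjoint_paths_extend[OF P(1,2,3)] two_disjoint_paths_extend[OF P(2,1)]
      P(3) wx(1) False by (fastforce simp: Int_commute)
qed

lemma no_cut_vertex_last_step:
  assumes "sym R" and "no_cut_vertex R s x" and p: "path_between R p s w"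
    and wx: "(w, x) \<in> R" "x \<notin> set p"
  shows "no_cut_vertex R s w"
  unfolding no_cut_vertex_def
proof (intro allI impI)
  fix z assume "z \<noteq> s" "z \<noteq> w"
  show "(s, w) \<in> (Restr R (- {z}))\<^sup>*"
  proof (cases "z = x")
    case True
    then have "walk (Restr R (- {z})) p"
      using p wx(2) unfolding path_between_def by (auto intro: successively_mono)
    then show ?thesis
      using walk_imp_rtrancl p unfolding path_between_def by fastforce
  next
    case False
    then have "(s, x) \<in> (Restr R (- {z}))\<^sup>*"
      using assms(2) \<open>z \<noteq> s\<close> unfolding no_cut_vertex_def by blast
    moreover have "(x, w) \<in> Restr R (- {z})"
      using wx(1) \<open>sym R\<close> False \<open>z \<noteq> w\<close> by (auto dest: symD)
    ultimately show ?thesis ..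
  qed
qed

theorem two_disjoint_paths_if_no_cut_vertex:
  assumes "sym R" and "no_cut_vertex R s x" "s \<noteq> x" "path_between R p s x"
  shows "two_disjoint_paths R s x"
  using assms(2-4)
proof (induction "length p" arbitrary: p x rule: less_induct)
  case less
  show ?case
  proof (cases "(s, x) \<in> R")
    case True
    then have "path_between R [s, x] s x"
      using less.prems(2) unfolding path_between_def by auto
    then show ?thesis
      unfolding two_disjoint_paths_def by (intro exI[of _ "[s, x]"]) auto
  next
    case False
    obtain p' where p_eq: "p = p' @ [x]"
      using less.prems(3) unfolding path_between_def by (metis append_butlast_last_id)
    define w where "w = last p'"
    have "p' \<noteq> []"
      using less.prems(2,3) False unfolding p_eq path_between_def by auto
    then have p': "path_between R p' s w" and wx: "(w, x) \<in> R" and "x \<notin> set p'"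
      using less.prems(3) unfolding p_eq path_between_def w_def
      by (auto simp: successively_append_iff)
    then have "w \<noteq> s" "w \<noteq> x"
      using False unfolding path_between_def by auto
    have "no_cut_vertex R s w"
      using no_cut_vertex_last_step[OF \<open>sym R\<close> less.prems(1) p' wx \<open>x \<notin> set p'\<close>] .
    then obtain P1 P2 where P: "path_between R P1 s w" "path_between R P2 s w"
      "set P1 \<inter> set P2 \<subseteq> {s, w}"
      using less.hyps[OF _ _ \<open>w \<noteq> s\<close>[symmetric] p'] unfolding p_eq two_disjoint_paths_def
      by auto
    have "(s, x) \<in> (Restr R (- {w}))\<^sup>*"
      using less.prems(1) \<open>w \<noteq> s\<close> \<open>w \<noteq> x\<close> unfolding no_cut_vertex_def by blast
    then obtain Q where "path_between R Q s x" "w \<notin> set Q"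
      using \<open>w \<noteq> s\<close> path_between_avoiding by metis
    then show ?thesis
      using two_disjoint_paths_step[OF \<open>sym R\<close> P wx] less.prems(2) \<open>w \<noteq> x\<close> by simp
  qed
qed

section \<open>Measurement paths and separators\<close>

lemma simple_path_iff_walk: "simple_path E p \<longleftrightarrow> p \<noteq> [] \<and> distinct p \<and> walk E p"
  unfolding simple_path_def successively_conv_nth ..

lemma csp_paths_iff:
  "p \<in> csp_paths E M \<longleftrightarrow>
     path_between E p (hd p) (last p) \<and> hd p \<in> M \<and> last p \<in> M \<and> hd p \<noteq> last p"
  by (auto simp: csp_paths_def simple_path_iff_walk path_between_def)

lemma path_between_in_csp_paths:
  "path_between E p a b \<Longrightarrow> a \<in> M \<Longrightarrow> b \<in> M \<Longrightarrow> a \<noteq> b \<Longrightarrow> p \<in> csp_paths E M"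
  unfolding csp_paths_iff by (simp add: path_between_def)

lemma failed_paths_insert_blocked:
  assumes "\<forall>p\<in>P. v \<in> set p \<longrightarrow> set p \<inter> F \<noteq> {}"
  shows "failed_paths P (insert v F) = failed_paths P F"
  using assms unfolding failed_paths_def by blast

definition monitor_segment :: "('a \<times> 'a) set \<Rightarrow> 'a set \<Rightarrow> 'a list \<Rightarrow> bool" where
  "monitor_segment E M q \<longleftrightarrow> q \<noteq> [] \<and> last q \<in> M \<and> set (butlast q) \<inter> M = {} \<and> walk E q"

lemma monitor_segment_prefix:
  assumes "walk E xs" "xs \<noteq> []" "last xs \<in> M"
  obtains q r where "xs = q @ r" "monitor_segment E M q"
proof -
  have "\<exists>x\<in>set xs. x \<in> M"
    using assms(2,3) last_in_set by blast
  then obtain ys x zs where xs: "xs = ys @ x # zs" "x \<in> M" "\<forall>y\<in>set ys. y \<notin> M"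
    using split_list_first_prop[of xs "\<lambda>x. x \<in> M"] by blast
  have "walk E ((ys @ [x]) @ zs)"
    using assms(1) xs(1) by simp
  then have "walk E (ys @ [x])"
    using successively_append_iff by blast
  then have "monitor_segment E M (ys @ [x])"
    using xs unfolding monitor_segment_def by auto
  then show thesis
    using xs(1) by (intro that[of "ys @ [x]" zs]) simp_all
qed

lemma Some_in_aux_vertices_iff [simp]: "Some a \<in> aux_vertices V M \<longleftrightarrow> a \<in> V - M"
  and None_in_aux_vertices [simp]: "None \<in> aux_vertices V M"
  by (auto simp: aux_vertices_def)

lemma aux_edges_Some_Some_iff [simp]:
    "(Some a, Some b) \<in> aux_edges V E M A \<longleftrightarrow> (a, b) \<in> E \<and> a \<in> V - M \<and> b \<in> V - M"
  and aux_edges_Some_None_iff [simp]: "(Some a, None) \<in> aux_edges V E M A \<longleftrightarrow> a \<in> A"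
  and aux_edges_None_Some_iff [simp]: "(None, Some a) \<in> aux_edges V E M A \<longleftrightarrow> a \<in> A"
  and aux_edges_None_None [simp]: "(None, None) \<notin> aux_edges V E M A"
  by (auto simp: aux_edges_def)

context
  fixes V :: "'a set" and E :: "('a \<times> 'a) set" and M :: "'a set"
  assumes simple: "simple_graph V E" and monitors: "M \<subseteq> V"
begin

lemma sym_E: "sym E"
  using simple unfolding simple_graph_def by blast

lemma finite_V: "finite V"
  using simple unfolding simple_graph_def by blast

lemma csp_path_subset_V:
  assumes "p \<in> csp_paths E M"
  shows "set p \<subseteq> V"
proof -
  have "E \<inter> V \<times> V = E"
    using simple unfolding simple_graph_def by blast
  then show ?thesis
    using assms monitors walk_restrict_subset[of E V p]
    unfolding csp_paths_iff path_between_def by auto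
qed

lemma csp_path_monitor_segments:
  assumes p: "p \<in> csp_paths E M" and v: "v \<in> set p" "v \<notin> M"
  obtains q1 q2 where "monitor_segment E M q1" "monitor_segment E M q2" "hd q1 = v" "hd q2 = v"
    "set q1 \<inter> set q2 = {v}" "last q1 \<noteq> last q2" "set q1 \<subseteq> set p" "set q2 \<subseteq> set p"
proof -
  obtain a b where p_eq: "p = a @ v # b"
    using v(1) split_list by metis
  have p_path: "path_between E (a @ v # b) (hd p) (last p)" and ends: "hd p \<in> M" "last p \<in> M"
    using p unfolding csp_paths_iff p_eq by auto
  have "path_between E (rev (a @ [v])) v (hd p)"
    using path_between_rev[OF sym_E path_between_appendD(1)[OF p_path]] .
  then obtain q1 r1 where q1: "rev (a @ [v]) = q1 @ r1" "monitor_segment E M q1"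
    using ends(1) monitor_segment_prefix unfolding path_between_def by metis
  have "path_between E (v # b) v (last p)"
    using path_between_appendD(2)[OF p_path] .
  then obtain q2 r2 where q2: "v # b = q2 @ r2" "monitor_segment E M q2"
    using ends(2) monitor_segment_prefix unfolding path_between_def by metis
  have "q1 \<noteq> []" "q2 \<noteq> []"
    using q1(2) q2(2) unfolding monitor_segment_def by auto
  then have hd: "hd q1 = v" "hd q2 = v"
    using q1(1) q2(1) by (metis hd_append2 hd_rev last_snoc, metis hd_append2 list.sel(1))
  have "set q1 \<subseteq> set (rev (a @ [v]))" "set q2 \<subseteq> set (v # b)"
    unfolding q1(1) q2(1) by auto
  then have sub: "set q1 \<subseteq> insert v (set a)" "set q2 \<subseteq> insert v (set b)"
    by auto
  moreover have "v \<in> set q1" "v \<in> set q2"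
    using hd \<open>q1 \<noteq> []\<close> \<open>q2 \<noteq> []\<close> by (metis hd_in_set)+
  moreover have "distinct (a @ v # b)"
    using p_path unfolding path_between_def by simp
  ultimately have inter: "set q1 \<inter> set q2 = {v}"
    by auto
  have "last q1 \<in> set q1 \<inter> M" "last q2 \<in> set q2 \<inter> M"
    using q1(2) q2(2) unfolding monitor_segment_def by auto
  then have "last q1 \<noteq> last q2"
    using inter v(2) by auto
  moreover have "set q1 \<subseteq> set p" "set q2 \<subseteq> set p"
    using sub unfolding p_eq by auto
  ultimately show thesis
    using that q1(2) q2(2) hd inter by blast
qed

abbreviation aux_V :: "'a option set" where
  "aux_V \<equiv> aux_vertices V M"

abbreviation aux_E :: "'a set \<Rightarrow> ('a option \<times> 'a option) set" where
  "aux_E A \<equiv> aux_edges V E M A"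

lemma separator_meets_monitor_segment:
  assumes q: "monitor_segment E M q" "hd q = v" "v \<notin> M" "last q \<in> M'" "set q \<subseteq> V"
    and C: "separates aux_V (aux_E (mon_nbrs V E M M')) (Some v) None C"
  shows "\<exists>y\<in>set (butlast q). Some y \<in> C"
proof (rule ccontr)
  assume avoid: "\<not> ?thesis"
  let ?R = "Restr (aux_E (mon_nbrs V E M M')) (aux_V - C)"
  define b where "b = butlast q"
  have q_eq: "q = b @ [last q]" and b_M: "set b \<inter> M = {}" and "walk E q"
    using q(1) unfolding monitor_segment_def b_def by auto
  have "b \<noteq> []"
    using q(1-3) q_eq unfolding monitor_segment_def by (metis append_Nil list.sel(1))
  have b_hd: "hd b = v"
    using q(2) q_eq \<open>b \<noteq> []\<close> by (metis hd_append2)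
  have b_V: "set b \<subseteq> V - M"
    using q(5) b_M unfolding b_def by (auto dest: in_set_butlastD)
  have b_C: "Some y \<notin> C" if "y \<in> set b" for y
    using avoid that unfolding b_def by blast
  have "walk E (b @ [last q])"
    using \<open>walk E q\<close> q(1) unfolding b_def monitor_segment_def by simp
  then have "walk E b" and last_edge: "(last b, last q) \<in> E"
    using \<open>b \<noteq> []\<close> by (auto simp: successively_append_iff)
  have "walk ?R (map Some b)"
    unfolding successively_map
  proof (rule successively_mono[OF \<open>walk E b\<close>])
    fix x y assume "(x, y) \<in> E" "x \<in> set b" "y \<in> set b"
    then show "(Some x, Some y) \<in> ?R"
      using b_V b_C by auto
  qed
  then have "(Some v, Some (last b)) \<in> ?R\<^sup>*"
    using walk_imp_rtrancl \<open>b \<noteq> []\<close> b_hd by (fastforce simp: hd_map last_map)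
  moreover have "last b \<in> mon_nbrs V E M M'"
    using last_edge sym_E q(4) b_V last_in_set[OF \<open>b \<noteq> []\<close>]
    unfolding mon_nbrs_def by (auto dest: symD)
  then have "(Some (last b), None) \<in> ?R"
    using b_C[of "last b"] b_V last_in_set[OF \<open>b \<noteq> []\<close>] C
    unfolding separates_def by auto
  ultimately have "(Some v, None) \<in> ?R\<^sup>*" ..
  then show False
    using C unfolding separates_def by blast
qed

lemma cut_size_adjacent:
  assumes "v \<in> A"
  shows "cut_size aux_V (aux_E A) (Some v) None = card (V - M)"
proof -
  have "aux_V - {None} = Some ` (V - M)"
    by (auto simp: aux_vertices_def)
  then show ?thesis
    using assms by (simp add: cut_size_def card_image)
qed

lemma finite_separator_sizes: "finite {card C | C. separates aux_V R s t C}"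
proof -
  have "finite aux_V"
    using finite_V by (simp add: aux_vertices_def)
  moreover have "{card C | C. separates aux_V R s t C} \<subseteq> card ` Pow aux_V"
    unfolding separates_def by auto
  ultimately show ?thesis
    using finite_subset by blast
qed

lemma cut_size_le:
  assumes "v \<notin> A" "separates aux_V (aux_E A) (Some v) None C"
  shows "cut_size aux_V (aux_E A) (Some v) None \<le> card C"
  using assms finite_separator_sizes unfolding cut_size_def by (auto intro: Min_le)

lemma cut_size_attained:
  assumes v: "v \<in> V - M" and "v \<notin> A"
  obtains D where "D \<subseteq> V - M - {v}" "separates aux_V (aux_E A) (Some v) None (Some ` D)"
    "card D = cut_size aux_V (aux_E A) (Some v) None"
proof -
  let ?R = "Restr (aux_E A) (aux_V - (aux_V - {Some v, None}))"
  have "y = Some v" if "(Some v, y) \<in> ?R\<^sup>*" for y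
    using that
  proof (induction rule: rtrancl_induct)
    case (step y z)
    then show ?case
      using \<open>v \<notin> A\<close> simple unfolding simple_graph_def by auto
  qed simp
  then have "separates aux_V (aux_E A) (Some v) None (aux_V - {Some v, None})"
    unfolding separates_def by blast
  then have nonempty: "{card C | C. separates aux_V (aux_E A) (Some v) None C} \<noteq> {}"
    by blast
  obtain C where C: "separates aux_V (aux_E A) (Some v) None C"
    "card C = cut_size aux_V (aux_E A) (Some v) None"
    using Min_in[OF finite_separator_sizes nonempty] \<open>v \<notin> A\<close> unfolding cut_size_def by auto
  moreover have "C \<subseteq> Some ` (V - M - {v})"
    using C(1) unfolding separates_def aux_vertices_def by auto
  then obtain D where "D \<subseteq> V - M - {v}" "C = Some ` D"
    by (auto simp: subset_image_iff)
  ultimately show thesis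
    using that by (simp add: card_image)
qed

definition cut_Gm :: "'a \<Rightarrow> 'a \<Rightarrow> nat" where
  "cut_Gm v m = cut_size aux_V (aux_E (mon_nbrs V E M (M - {m}))) (Some v) None"

definition cut_Gstar :: "'a \<Rightarrow> nat" where
  "cut_Gstar v = cut_size aux_V (aux_E (mon_nbrs V E M M)) (Some v) None"

lemma pi_val_eq: "pi_val V E M v = Min ((\<lambda>m. int (cut_Gm v m)) ` M \<union> {int (cut_Gstar v) - 1})"
  unfolding pi_val_def cut_Gm_def cut_Gstar_def by (rule arg_cong[where f = Min]) auto

lemma pi_val_ge_iff:
  "a \<le> pi_val V E M v \<longleftrightarrow> (\<forall>m\<in>M. a \<le> int (cut_Gm v m)) \<and> a \<le> int (cut_Gstar v) - 1"
  using finite_V monitors finite_subset unfolding pi_val_eq by (subst Min_ge_iff) auto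

lemma pi_val_less_iff:
  "pi_val V E M v < a \<longleftrightarrow> (\<exists>m\<in>M. int (cut_Gm v m) < a) \<or> int (cut_Gstar v) - 1 < a"
  using finite_V monitors finite_subset unfolding pi_val_eq by (subst Min_less_iff) auto

lemma Gm_separator_meets_csp_paths:
  assumes v: "v \<in> V - M" and "m \<in> M"
    and C: "separates aux_V (aux_E (mon_nbrs V E M (M - {m}))) (Some v) None C"
    and p: "p \<in> csp_paths E M" "v \<in> set p"
  shows "\<exists>y\<in>set p. Some y \<in> C"
proof -
  obtain q1 q2 where segs: "monitor_segment E M q1" "monitor_segment E M q2" "hd q1 = v" "hd q2 = v"
    "set q1 \<inter> set q2 = {v}" "last q1 \<noteq> last q2" "set q1 \<subseteq> set p" "set q2 \<subseteq> set p"
    using csp_path_monitor_segments[OF p] v by blast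
  then have "\<exists>q\<in>{q1, q2}. last q \<in> M - {m}"
    unfolding monitor_segment_def by auto
  then obtain q where q: "monitor_segment E M q" "hd q = v" "last q \<in> M - {m}" "set q \<subseteq> set p"
    using segs by blast
  then have "set q \<subseteq> V"
    using csp_path_subset_V[OF p(1)] by blast
  then show ?thesis
    using separator_meets_monitor_segment[OF q(1,2) _ q(3) _ C] v q(4)
    by (auto dest: in_set_butlastD)
qed

lemma Gstar_separator_meets_csp_paths_twice:
  assumes v: "v \<in> V - M"
    and C: "separates aux_V (aux_E (mon_nbrs V E M M)) (Some v) None C"
    and p: "p \<in> csp_paths E M" "v \<in> set p"
  shows "\<exists>y1\<in>set p. \<exists>y2\<in>set p. y1 \<noteq> y2 \<and> Some y1 \<in> C \<and> Some y2 \<in> C"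
proof -
  obtain q1 q2 where q: "monitor_segment E M q1" "monitor_segment E M q2" "hd q1 = v" "hd q2 = v"
    "set q1 \<inter> set q2 = {v}" "last q1 \<noteq> last q2" "set q1 \<subseteq> set p" "set q2 \<subseteq> set p"
    using csp_path_monitor_segments[OF p] v by blast
  have "set q1 \<subseteq> V" "set q2 \<subseteq> V" "last q1 \<in> M" "last q2 \<in> M"
    using q(1,2,7,8) csp_path_subset_V[OF p(1)] unfolding monitor_segment_def by blast+
  then obtain y1 y2 where "y1 \<in> set (butlast q1)" "Some y1 \<in> C"
    and "y2 \<in> set (butlast q2)" "Some y2 \<in> C"
    using separator_meets_monitor_segment[OF q(1,3) _ _ _ C]
      separator_meets_monitor_segment[OF q(2,4) _ _ _ C] v by blast
  then have "y1 \<in> set q1" "y2 \<in> set q2"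
    by (auto dest: in_set_butlastD)
  moreover have "Some v \<notin> C"
    using C unfolding separates_def by blast
  ultimately have "y1 \<noteq> y2"
    using q(5) \<open>Some y1 \<in> C\<close> by (metis IntI singletonD)
  then show ?thesis
    using q(7,8) \<open>y1 \<in> set q1\<close> \<open>y2 \<in> set q2\<close> \<open>Some y1 \<in> C\<close> \<open>Some y2 \<in> C\<close> by blast
qed

lemma blocking_set_if_pi_val_less:
  assumes v: "v \<in> V - M" and pi: "pi_val V E M v < int k" and k: "1 \<le> k" "k < card (V - M)"
  obtains F where "F \<subseteq> V - M - {v}" "card F < k"
    "\<forall>p\<in>csp_paths E M. v \<in> set p \<longrightarrow> set p \<inter> F \<noteq> {}"
proof -
  from pi consider (Gm) m where "m \<in> M" "cut_Gm v m < k" | (Gstar) "int (cut_Gstar v) - 1 < int k"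
    unfolding pi_val_less_iff by auto
  then show thesis
  proof cases
    case Gm
    let ?A = "mon_nbrs V E M (M - {m})"
    have "v \<notin> ?A"
      using cut_size_adjacent Gm(2) k(2) unfolding cut_Gm_def by fastforce
    then obtain D where D: "D \<subseteq> V - M - {v}" "separates aux_V (aux_E ?A) (Some v) None (Some ` D)"
      "card D = cut_Gm v m"
      using cut_size_attained[OF v] unfolding cut_Gm_def by metis
    show thesis
    proof (rule that[OF D(1)])
      show "card D < k"
        using D(3) Gm(2) by simp
      show "\<forall>p\<in>csp_paths E M. v \<in> set p \<longrightarrow> set p \<inter> D \<noteq> {}"
        using Gm_separator_meets_csp_paths[OF v Gm(1) D(2)] by blast
    qed
  next
    case Gstar
    let ?A = "mon_nbrs V E M M"
    have "v \<notin> ?A"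
      using cut_size_adjacent Gstar k(2) unfolding cut_Gstar_def by fastforce
    then obtain D where D: "D \<subseteq> V - M - {v}" "separates aux_V (aux_E ?A) (Some v) None (Some ` D)"
      "card D = cut_Gstar v"
      using cut_size_attained[OF v] unfolding cut_Gstar_def by metis
    \<comment> \<open>Each measurement path through v meets D twice, so D without any one node u still
      blocks it (u is arbitrary if D is empty).\<close>
    obtain u where "D \<noteq> {} \<Longrightarrow> u \<in> D"
      by blast
    then have u: "card (D - {u}) = card D - 1"
      by (cases "D = {}") (auto simp: card_Diff_singleton_if)
    show thesis
    proof (rule that[of "D - {u}"])
      show "D - {u} \<subseteq> V - M - {v}"
        using D(1) by blast
      show "card (D - {u}) < k"
        using u D(3) Gstar k(1) by linarith
      show "\<forall>p\<in>csp_paths E M. v \<in> set p \<longrightarrow> set p \<inter> (D - {u}) \<noteq> {}"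
        using Gstar_separator_meets_csp_paths_twice[OF v D(2)] by blast
    qed
  qed
qed

section \<open>Measurement paths avoiding a failure set\<close>

(* Unlike the auxiliary graph, the monitors of M' stay as nodes between the non-monitors and the
   virtual node None, so that a path to None can be read back as a path of G ending at a monitor. *)
definition sink_graph :: "'a set \<Rightarrow> 'a set \<Rightarrow> ('a option \<times> 'a option) set" where
  "sink_graph D M' =
     {(Some a, Some b) | a b. (a, b) \<in> E \<and> a \<in> V - M - D \<and> b \<in> V - M - D}
     \<union> {(Some a, Some m) | a m. (a, m) \<in> E \<and> a \<in> V - M - D \<and> m \<in> M'}
     \<union> {(Some m, Some a) | a m. (a, m) \<in> E \<and> a \<in> V - M - D \<and> m \<in> M'}
     \<union> {(Some m, None) | m. m \<in> M'} \<union> {(None, Some m) | m. m \<in> M'}"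

lemma sym_sink_graph: "sym (sink_graph D M')"
  using sym_E unfolding sink_graph_def sym_def by blast

lemma sink_graph_via_monitor:
  assumes "b \<in> V - M - D" "m \<in> M'" "(m, b) \<in> E"
  shows "(Some b, None) \<in> (sink_graph D M')\<^sup>*" and "(None, Some b) \<in> (sink_graph D M')\<^sup>*"
proof -
  have "(b, m) \<in> E"
    using assms(3) sym_E by (auto dest: symD)
  then have "(Some b, Some m) \<in> sink_graph D M'" "(Some m, None) \<in> sink_graph D M'"
    "(None, Some m) \<in> sink_graph D M'" "(Some m, Some b) \<in> sink_graph D M'"
    using assms unfolding sink_graph_def by blast+
  then show "(Some b, None) \<in> (sink_graph D M')\<^sup>*" "(None, Some b) \<in> (sink_graph D M')\<^sup>*"
    by (meson r_into_rtrancl rtrancl_into_rtrancl)+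
qed

lemma aux_edges_avoiding_in_sink_graph:
  "Restr (aux_E (mon_nbrs V E M M')) (aux_V - Some ` D) \<subseteq> (sink_graph D M')\<^sup>*"
proof clarify
  fix x y assume xy: "(x, y) \<in> aux_E (mon_nbrs V E M M')" "x \<in> aux_V" "y \<in> aux_V"
    "x \<notin> Some ` D" "y \<notin> Some ` D"
  show "(x, y) \<in> (sink_graph D M')\<^sup>*"
  proof (cases x; cases y)
    fix a b assume "x = Some a" "y = Some b"
    then have "(x, y) \<in> sink_graph D M'"
      using xy unfolding sink_graph_def by auto
    then show ?thesis ..
  next
    fix b assume xy_eq: "x = None" "y = Some b"
    then obtain m where "b \<in> V - M - D" "m \<in> M'" "(m, b) \<in> E"
      using xy unfolding mon_nbrs_def by auto
    then show ?thesis
      using xy_eq sink_graph_via_monitor(2) by blast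
  next
    fix a assume xy_eq: "x = Some a" "y = None"
    then obtain m where "a \<in> V - M - D" "m \<in> M'" "(m, a) \<in> E"
      using xy unfolding mon_nbrs_def by auto
    then show ?thesis
      using xy_eq sink_graph_via_monitor(1) by blast
  qed (use xy in simp)
qed

lemma sink_graph_reaches_sink:
  assumes v: "v \<in> V - M - D" and D: "D \<subseteq> V - M"
    and small: "card D < cut_size aux_V (aux_E (mon_nbrs V E M M')) (Some v) None"
  shows "(Some v, None) \<in> (sink_graph D M')\<^sup>*"
proof (cases "v \<in> mon_nbrs V E M M'")
  case True
  then show ?thesis
    using v sink_graph_via_monitor(1) unfolding mon_nbrs_def by blast
next
  case False
  have "\<not> separates aux_V (aux_E (mon_nbrs V E M M')) (Some v) None (Some ` D)"
    using cut_size_le[OF False] small by (fastforce simp: card_image)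
  moreover have "Some ` D \<subseteq> aux_V - {Some v, None}"
    using D v by auto
  ultimately have "(Some v, None) \<in> (Restr (aux_E (mon_nbrs V E M M')) (aux_V - Some ` D))\<^sup>*"
    unfolding separates_def by blast
  then show ?thesis
    using aux_edges_avoiding_in_sink_graph rtrancl_subset_rtrancl by blast
qed

lemma sink_graph_no_cut_vertex:
  assumes v: "v \<in> V - M" and F: "F \<subseteq> V - M - {v}" "card F \<le> k"
    and pi: "int k + 1 \<le> pi_val V E M v"
  shows "no_cut_vertex (sink_graph F M) (Some v) None"
  unfolding no_cut_vertex_def
proof (intro allI impI)
  fix z assume "z \<noteq> Some v" "z \<noteq> None"
  then obtain u where z: "z = Some u" "u \<noteq> v"
    by auto
  show "(Some v, None) \<in> (Restr (sink_graph F M) (- {z}))\<^sup>*"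
  proof (cases "u \<in> M")
    case True
    have "card F < cut_Gm v u"
      using pi F(2) True unfolding pi_val_ge_iff by force
    then have "(Some v, None) \<in> (sink_graph F (M - {u}))\<^sup>*"
      using sink_graph_reaches_sink[of v F "M - {u}"] v F(1) unfolding cut_Gm_def by blast
    moreover have "sink_graph F (M - {u}) \<subseteq> Restr (sink_graph F M) (- {z})"
      using z True unfolding sink_graph_def by blast
    ultimately show ?thesis
      using rtrancl_mono by blast
  next
    case False
    define D where "D = insert u F \<inter> (V - M)"
    have "finite F"
      using F(1) finite_V finite_subset by blast
    then have "card D \<le> card (insert u F)"
      unfolding D_def by (intro card_mono) auto
    also have "\<dots> \<le> k + 1"
      using \<open>finite F\<close> F(2) by (simp add: card_insert_if)
    also have "k + 1 < cut_Gstar v"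
      using pi unfolding pi_val_ge_iff by linarith
    finally have "card D < cut_Gstar v" .
    then have "(Some v, None) \<in> (sink_graph D M)\<^sup>*"
      using sink_graph_reaches_sink[of v D M] v F(1) z(2) unfolding cut_Gstar_def D_def by auto
    moreover have "sink_graph D M \<subseteq> Restr (sink_graph F M) (- {z})"
      using z False F(1) unfolding sink_graph_def D_def by blast
    ultimately show ?thesis
      using rtrancl_mono by blast
  qed
qed

lemma sink_path_yields_monitor_path:
  assumes "path_between (sink_graph F M) P (Some a) None" "a \<in> V - M - F" "F \<inter> M = {}"
  shows "\<exists>q m. m \<in> M \<and> path_between E q a m \<and> set q \<inter> F = {} \<and> Some ` set q \<subseteq> set P"
  using assms(1,2)
proof (induction P arbitrary: a)
  case Nil
  then show ?case
    by (simp add: path_between_def)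
next
  case (Cons X P)
  then have X: "X = Some a" and "P \<noteq> []"
    unfolding path_between_def by auto
  then obtain Y P' where P_eq: "P = Y # P'"
    by (cases P) auto
  have a_P: "Some a \<notin> set P"
    using Cons.prems(1) X unfolding path_between_def by simp
  have "(Some a, Y) \<in> sink_graph F M"
    using Cons.prems(1) X P_eq unfolding path_between_def by simp
  then consider (inner) b where "Y = Some b" "(a, b) \<in> E" "b \<in> V - M - F"
    | (monitor) m where "Y = Some m" "(a, m) \<in> E" "m \<in> M"
    using Cons.prems(2) unfolding sink_graph_def by blast
  then show ?case
  proof cases
    case inner
    have "path_between (sink_graph F M) P (Some b) None"
      using Cons.prems(1) \<open>P \<noteq> []\<close> inner(1) unfolding P_eq path_between_def by auto
    then obtain q m where q: "m \<in> M" "path_between E q b m" "set q \<inter> F = {}"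
      "Some ` set q \<subseteq> set P"
      using Cons.IH inner(3) by blast
    obtain q' where "q = b # q'"
      using q(2) unfolding path_between_def by (cases q) auto
    moreover have "a \<notin> set q"
      using q(4) a_P by blast
    ultimately have "path_between E (a # q) a m"
      using q(2) inner(2) unfolding path_between_def by auto
    then show ?thesis
      using q Cons.prems(2) X by (intro exI[of _ "a # q"] exI[of _ m]) auto
  next
    case monitor
    have "path_between E [a, m] a m"
      using monitor Cons.prems(2) unfolding path_between_def by auto
    then show ?thesis
      using monitor X assms(3) P_eq Cons.prems(2) by (intro exI[of _ "[a, m]"] exI[of _ m]) auto
  qed
qed

lemma csp_path_avoiding_if_pi_val_greater:
  assumes v: "v \<in> V - M" and F: "F \<subseteq> V - M - {v}" "card F \<le> k"
    and pi: "int k + 1 \<le> pi_val V E M v"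
  obtains p where "p \<in> csp_paths E M" "v \<in> set p" "set p \<inter> F = {}"
proof -
  let ?K = "sink_graph F M"
  have "card F < cut_Gstar v"
    using pi F(2) unfolding pi_val_ge_iff by linarith
  then have "(Some v, None) \<in> ?K\<^sup>*"
    using sink_graph_reaches_sink[of v F M] v F(1) unfolding cut_Gstar_def by blast
  then obtain P where "path_between ?K P (Some v) None"
    by (rule rtrancl_imp_path_between)
  then have "two_disjoint_paths ?K (Some v) None"
    using two_disjoint_paths_if_no_cut_vertex[OF sym_sink_graph sink_graph_no_cut_vertex[OF v F pi]]
    by blast
  then obtain P1 P2 where P: "path_between ?K P1 (Some v) None" "path_between ?K P2 (Some v) None"
    "set P1 \<inter> set P2 \<subseteq> {Some v, None}"
    unfolding two_disjoint_paths_def by blast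
  have "v \<in> V - M - F" "F \<inter> M = {}"
    using v F(1) by auto
  then obtain q1 m1 q2 m2 where q1: "m1 \<in> M" "path_between E q1 v m1" "set q1 \<inter> F = {}"
      "Some ` set q1 \<subseteq> set P1"
    and q2: "m2 \<in> M" "path_between E q2 v m2" "set q2 \<inter> F = {}" "Some ` set q2 \<subseteq> set P2"
    using sink_path_yields_monitor_path P(1,2) by metis
  have disj: "set q1 \<inter> set q2 \<subseteq> {v}"
    using P(3) q1(4) q2(4) by blast
  then have p: "path_between E (rev q1 @ tl q2) m1 m2"
    using path_between_join[OF path_between_rev[OF sym_E q1(2)] q2(2)] by auto
  have ends: "m1 \<in> set q1" "m2 \<in> set q2" "v \<in> set q1"
    using q1(2) q2(2) unfolding path_between_def by auto
  have "set (tl q2) \<subseteq> set q2"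
    by (cases q2) auto
  then have "set (rev q1 @ tl q2) \<inter> F = {}"
    using q1(3) q2(3) by auto
  moreover have "m1 \<noteq> m2" "v \<in> set (rev q1 @ tl q2)"
    using ends disj q1(1) v by auto
  ultimately show thesis
    using that path_between_in_csp_paths[OF p q1(1) q2(1)] by blast
qed

lemma k_identifiable_subset_S_outer:
  assumes S: "k_identifiable E M (V - M) k S" "S \<subseteq> V - M" and k: "1 \<le> k" "k < card (V - M)"
  shows "S \<subseteq> S_outer V E M k"
proof
  fix v assume "v \<in> S"
  then have v: "v \<in> V - M"
    using S(2) by blast
  show "v \<in> S_outer V E M k"
  proof (rule ccontr)
    assume "v \<notin> S_outer V E M k"
    then have "pi_val V E M v < int k"
      using v unfolding S_outer_def by auto
    then obtain F where F: "F \<subseteq> V - M - {v}" "card F < k"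
      "\<forall>p\<in>csp_paths E M. v \<in> set p \<longrightarrow> set p \<inter> F \<noteq> {}"
      using blocking_set_if_pi_val_less[OF v _ k] by blast
    have "finite F"
      using F(1) finite_V finite_subset by blast
    then have "card (insert v F) \<le> k"
      using F(2) by (simp add: card_insert_if)
    moreover have "insert v F \<inter> S \<noteq> F \<inter> S"
      using \<open>v \<in> S\<close> F(1) by blast
    ultimately have "failed_paths (csp_paths E M) (insert v F) \<noteq> failed_paths (csp_paths E M) F"
      using S(1)[unfolded k_identifiable_def, rule_format, of "insert v F" F] F(1,2) v by auto
    then show False
      using failed_paths_insert_blocked[OF F(3)] by blast
  qed
qed

lemma k_identifiable_insert_S_inner:
  assumes S: "k_identifiable E M (V - M) k S" and v: "v \<in> S_inner V E M k"
  shows "k_identifiable E M (V - M) k (insert v S)"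
proof -
  let ?P = "csp_paths E M"
  have distinguished: "failed_paths ?P F1 \<noteq> failed_paths ?P F2"
    if F2: "F2 \<subseteq> V - M" "card F2 \<le> k" "v \<notin> F2" and "v \<in> F1" for F1 F2
  proof -
    have "v \<in> V - M" "int k + 1 \<le> pi_val V E M v"
      using v unfolding S_inner_def by auto
    then obtain p where "p \<in> ?P" "v \<in> set p" "set p \<inter> F2 = {}"
      using csp_path_avoiding_if_pi_val_greater F2 by (metis Diff_empty subset_Diff_insert)
    then show ?thesis
      using \<open>v \<in> F1\<close> unfolding failed_paths_def by blast
  qed
  show ?thesis
    unfolding k_identifiable_def
  proof (intro allI impI)
    fix F1 F2 assume F: "F1 \<subseteq> V - M" "F2 \<subseteq> V - M" "card F1 \<le> k" "card F2 \<le> k"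
      "F1 \<inter> insert v S \<noteq> F2 \<inter> insert v S"
    show "failed_paths ?P F1 \<noteq> failed_paths ?P F2"
    proof (cases "F1 \<inter> S = F2 \<inter> S")
      case True
      then have "v \<in> F1 \<and> v \<notin> F2 \<or> v \<in> F2 \<and> v \<notin> F1"
        using F(5) by blast
      then show ?thesis
        using distinguished[of F2 F1] distinguished[of F1 F2] F(1-4) by metis
    next
      case False
      then show ?thesis
        using S F(1-4) unfolding k_identifiable_def by blast
    qed
  qed
qed

end

theorem corollary5:
  fixes V M S :: "'a set" and E :: "('a \<times> 'a) set" and k :: nat
  assumes "simple_graph V E" and "connected_graph V E" and "M \<subseteq> V"
    and "1 \<le> k" and "k \<le> card (V - M) - 1"
    and "S \<subseteq> V - M" and "k_identifiable E M (V - M) k S"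
    and "\<forall>S'. S' \<subseteq> V - M \<and> k_identifiable E M (V - M) k S' \<longrightarrow> card S' \<le> card S"
  shows "S_inner V E M k \<subseteq> S \<and> S \<subseteq> S_outer V E M k"
proof
  show "S_inner V E M k \<subseteq> S"
  proof
    fix v assume v: "v \<in> S_inner V E M k"
    have "insert v S \<subseteq> V - M"
      using v assms(6) unfolding S_inner_def by blast
    then have "card (insert v S) \<le> card S"
      using assms(8) k_identifiable_insert_S_inner[OF assms(1,3,7) v] by blast
    moreover have "finite S"
      using assms(1,6) finite_subset unfolding simple_graph_def by blast
    ultimately show "v \<in> S"
      by (metis card_insert_disjoint lessI not_le)
  qed
  have "k < card (V - M)"
    using assms(4,5) by linarith
  then show "S \<subseteq> S_outer V E M k"
    using k_identifiable_subset_S_outer[OF assms(1,3,7,6,4)] by blast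
qed

end
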